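(* Fix an integer $M \geq 2$. Consider a tensor network of $n$ tensors, each with at most $M$ entries, to be fully contracted to a scalar, whose underlying graph (vertices = tensors, edges = contracted indices) is planar. Then, for sufficiently large $n$, the tensor network can be contracted to a scalar by a sequence of pairwise contractions using fewer than $$2\, n^{1/\log_2(3/2)}\; M^{\,a_2' \sqrt{n}}$$ scalar operations, where $a_2' = \dfrac{c_{\mathrm{PST}}}{2-2\sqrt{2/3}}$.
   Context: A tensor network is a collection of tensors (multi-dimensional arrays of complex numbers) with finite-dimensional indices; an index shared by two tensors is contracted (summed over), and full contraction to a scalar sums over all indices. Contracting two tensors pairwise costs a number of scalar multiplications equal to the product of the dimensions of all indices of the two tensors (shared indices counted once), plus at most as many additions. The constant $c_{\mathrm{PST}}$ is the constant of the Planar Separator Theorem: every planar graph on $n$ vertices can be split into two mutually disconnected graphs of at most $2n/3$ vertices each by removing at most $c_{\mathrm{PST}}\sqrt{n} + O(1)$ vertices; it is known that one can take $c_{\mathrm{PST}} < 1.971$. *)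

theory Defs
  imports "HOL-Analysis.Analysis"
begin

definition simple_graph :: "'a set \<Rightarrow> 'a set set \<Rightarrow> bool" where
  "simple_graph V Eg \<longleftrightarrow> finite V \<and> (\<forall>e\<in>Eg. e \<subseteq> V \<and> card e = 2)"

definition planar_graph :: "'a set \<Rightarrow> 'a set set \<Rightarrow> bool" where
  "planar_graph V Eg \<longleftrightarrow>
     (\<exists>(p :: 'a \<Rightarrow> complex) (\<gamma> :: 'a set \<Rightarrow> real \<Rightarrow> complex).
        inj_on p V \<and>
        (\<forall>e\<in>Eg. arc (\<gamma> e) \<and> {pathstart (\<gamma> e), pathfinish (\<gamma> e)} = p ` e
                 \<and> path_image (\<gamma> e) \<inter> p ` V = p ` e) \<and>
        (\<forall>e\<in>Eg. \<forall>f\<in>Eg. e \<noteq> f \<longrightarrow> path_image (\<gamma> e) \<inter> path_image (\<gamma> f) = p ` (e \<inter> f)))"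

definition planar_separator_const :: "real \<Rightarrow> bool" where
  "planar_separator_const c \<longleftrightarrow>
     (\<exists>K::real. \<forall>(V :: nat set) Eg. simple_graph V Eg \<and> planar_graph V Eg \<longrightarrow>
        (\<exists>S A B. S \<union> A \<union> B = V \<and> S \<inter> A = {} \<and> S \<inter> B = {} \<and> A \<inter> B = {}
           \<and> real (card A) \<le> 2 * real (card V) / 3 \<and> real (card B) \<le> 2 * real (card V) / 3
           \<and> real (card S) \<le> c * sqrt (real (card V)) + K
           \<and> (\<forall>e\<in>Eg. \<not> (e \<inter> A \<noteq> {} \<and> e \<inter> B \<noteq> {}))))"

definition tensor_entries :: "'e set \<Rightarrow> ('e \<Rightarrow> nat set) \<Rightarrow> ('e \<Rightarrow> nat) \<Rightarrow> nat \<Rightarrow> nat" where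
  "tensor_entries E ends d v = (\<Prod>e\<in>{e\<in>E. v \<in> ends e}. d e)"

definition tensor_network :: "nat \<Rightarrow> 'e set \<Rightarrow> ('e \<Rightarrow> nat set) \<Rightarrow> ('e \<Rightarrow> nat) \<Rightarrow> nat \<Rightarrow> bool" where
  "tensor_network n E ends d M \<longleftrightarrow>
     finite E \<and> (\<forall>e\<in>E. ends e \<subseteq> {..<n} \<and> card (ends e) = 2 \<and> d e \<ge> 1)
     \<and> (\<forall>v<n. tensor_entries E ends d v \<le> M)"

definition underlying_edges :: "'e set \<Rightarrow> ('e \<Rightarrow> nat set) \<Rightarrow> nat set set" where
  "underlying_edges E ends = ends ` E"

text \<open>During contraction, the current tensors correspond to clusters (sets) of original
  tensors. The indices of the cluster tensor A are the original indices with exactly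
  one endpoint in A (indices internal to A have been summed over).\<close>

definition open_indices :: "'e set \<Rightarrow> ('e \<Rightarrow> nat set) \<Rightarrow> nat set \<Rightarrow> 'e set" where
  "open_indices E ends A = {e\<in>E. card (ends e \<inter> A) = 1}"

text \<open>Number of scalar operations for pairwise contraction of clusters A and B:
  product of dimensions of all indices of the two tensors (shared counted once)
  multiplications, plus at most as many additions; we count the worst case 2 * product.\<close>

definition pair_cost :: "'e set \<Rightarrow> ('e \<Rightarrow> nat set) \<Rightarrow> ('e \<Rightarrow> nat) \<Rightarrow> nat set \<Rightarrow> nat set \<Rightarrow> nat" where
  "pair_cost E ends d A B = 2 * (\<Prod>e\<in>open_indices E ends A \<union> open_indices E ends B. d e)"

fun valid_steps :: "nat set set \<Rightarrow> (nat set \<times> nat set) list \<Rightarrow> bool" where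
  "valid_steps P [] \<longleftrightarrow> card P = 1"
| "valid_steps P ((A, B) # s) \<longleftrightarrow>
     A \<in> P \<and> B \<in> P \<and> A \<noteq> B \<and> valid_steps (insert (A \<union> B) (P - {A, B})) s"

fun steps_cost :: "'e set \<Rightarrow> ('e \<Rightarrow> nat set) \<Rightarrow> ('e \<Rightarrow> nat) \<Rightarrow> (nat set \<times> nat set) list \<Rightarrow> nat" where
  "steps_cost E ends d [] = 0"
| "steps_cost E ends d ((A, B) # s) = pair_cost E ends d A B + steps_cost E ends d s"

definition contraction_sequence :: "nat \<Rightarrow> (nat set \<times> nat set) list \<Rightarrow> bool" where
  "contraction_sequence n s \<longleftrightarrow> valid_steps ((\<lambda>v. {v}) ` {..<n}) s"

end

theory Submission
  imports Defs "HOL-Real_Asymp.Real_Asymp"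
begin

text \<open>
  Contract recursively along planar separators. A cluster C of m tensors is split by the Planar
  Separator Theorem, applied to the underlying graph restricted to C, into S, X, Y with no index
  between X and Y; the clusters X \<union> S and Y are contracted recursively and then merged. An index
  open at X \<union> S or at Y is open at C or joins S to Y, and after possibly swapping X and Y the
  indices joining S to Y have total dimension at most M^(|S|/2). So the squared size of the cluster
  tensors grows by a factor M^|S| per level of the recursion. This is paid for by the potential
  \<Phi>(m) = \<alpha> sqrt m + \<beta> ln m with \<alpha> = c / (1 - sqrt (2/3)), which drops by at least |S| per
  level. Hence every pairwise contraction costs at most 2 M^(\<alpha> sqrt n / 2), clusters with
  2m \<le> \<alpha> sqrt n being contracted naively, and the n - 1 contractions stay below the claimed bound.
  That c > 0 follows from the k \<times> k grid, which is planar but has no separator of size below k/3.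
\<close>

section \<open>Planar graphs and separators\<close>

definition gaussian_int :: "complex \<Rightarrow> bool" where
  "gaussian_int z \<longleftrightarrow> Re z \<in> \<int> \<and> Im z \<in> \<int>"

lemma Ints_between_0_1: "(u::real) \<in> \<int> \<Longrightarrow> 0 \<le> u \<Longrightarrow> u \<le> 1 \<Longrightarrow> u = 0 \<or> u = 1"
  by (elim Ints_cases) auto

lemma closed_segment_eq_add_scaleR:
  "z \<in> closed_segment a b \<longleftrightarrow> (\<exists>u. 0 \<le> u \<and> u \<le> 1 \<and> z = a + u *\<^sub>R (b - a))"
  by (auto simp: in_segment algebra_simps)

lemma unit_segment_gaussian_int:
  assumes "gaussian_int a" "b - a \<in> {1, \<i>}" "z \<in> closed_segment a b" "gaussian_int z"
  shows "z = a \<or> z = b"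
proof -
  obtain u where u: "0 \<le> u" "u \<le> 1" "z = a + u *\<^sub>R (b - a)"
    using assms(3) closed_segment_eq_add_scaleR by blast
  have "u = Re z - Re a \<or> u = Im z - Im a"
    using assms(2) u(3) by (auto simp: complex_eq_iff)
  then have "u \<in> \<int>"
    using assms(1,4) by (auto simp: gaussian_int_def)
  then have "u = 0 \<or> u = 1"
    using Ints_between_0_1 u(1,2) by blast
  then show ?thesis
    using u(3) by auto
qed

lemma unit_segment_non_gaussian_int:
  assumes "gaussian_int a" "b - a \<in> {1, \<i>}" "z \<in> closed_segment a b" "\<not> gaussian_int z"
  shows "a = Complex (of_int \<lfloor>Re z\<rfloor>) (of_int \<lfloor>Im z\<rfloor>) \<and> b - a = (if Im z \<in> \<int> then 1 else \<i>)"
proof -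
  obtain u where u: "0 \<le> u" "u \<le> 1" "z = a + u *\<^sub>R (b - a)"
    using assms(3) closed_segment_eq_add_scaleR by blast
  have "b = a + 1 \<or> b = a + \<i>"
    using assms(2) by (auto simp: algebra_simps)
  then have "gaussian_int b"
    using assms(1) by (auto simp: gaussian_int_def intro!: Ints_add)
  then have "u \<noteq> 1"
    using assms(4) u(3) by auto
  then have floor_add: "\<lfloor>x + u\<rfloor> = \<lfloor>x\<rfloor>" if "x \<in> \<int>" for x
    using that u(1,2) by (elim Ints_cases) (simp add: floor_unique)
  from assms(2) show ?thesis
  proof
    assume "b - a = 1"
    then show ?thesis
      using assms(1) u(3) floor_add[of "Re a"] by (auto simp: gaussian_int_def complex_eq_iff)
  next
    assume "b - a \<in> {\<i>}"
    then have "Re z = Re a" "Im z = Im a + u" "Im z \<notin> \<int>"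
      using assms(1,4) u(3) by (auto simp: gaussian_int_def)
    then show ?thesis
      using assms(1) \<open>b - a \<in> {\<i>}\<close> floor_add[of "Im a"] by (auto simp: gaussian_int_def complex_eq_iff)
  qed
qed

lemma planar_graph_lattice_embedding:
  assumes inj: "inj_on p V" and lattice: "\<And>v. v \<in> V \<Longrightarrow> gaussian_int (p v)"
    and edges: "\<And>e. e \<in> Eg \<Longrightarrow> \<exists>a\<in>V. \<exists>b\<in>V. e = {a, b} \<and> p b - p a \<in> {1, \<i>}"
  shows "planar_graph V Eg"
proof -
  obtain a b where ab: "\<And>e. e \<in> Eg \<Longrightarrow> a e \<in> V \<and> b e \<in> V \<and> e = {a e, b e} \<and> p (b e) - p (a e) \<in> {1, \<i>}"
    using edges by metis
  define \<gamma> where "\<gamma> e = linepath (p (a e)) (p (b e))" for e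
  have image: "p ` e = {p (a e), p (b e)}" if "e \<in> Eg" for e
    using ab[OF that] by (metis image_insert image_empty)
  have endpoints: "p ` e \<subseteq> path_image (\<gamma> e)" if "e \<in> Eg" for e
    by (simp add: \<gamma>_def image[OF that])
  have subset: "e \<subseteq> V" if "e \<in> Eg" for e
    using ab[OF that] by (metis empty_subsetI insert_subset)
  have on_vertex: "z \<in> p ` e" if "e \<in> Eg" "z \<in> path_image (\<gamma> e)" "gaussian_int z" for e z
    using unit_segment_gaussian_int[of "p (a e)" "p (b e)" z] ab[OF that(1)] lattice that
    by (auto simp: \<gamma>_def image)
  have off_vertex: "e = f"
    if "e \<in> Eg" "f \<in> Eg" "z \<in> path_image (\<gamma> e)" "z \<in> path_image (\<gamma> f)" "\<not> gaussian_int z" for e f z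
  proof -
    have "z \<in> closed_segment (p (a e)) (p (b e))" "z \<in> closed_segment (p (a f)) (p (b f))"
      using that(3,4) by (simp_all add: \<gamma>_def)
    then have "p (a e) = p (a f) \<and> p (b e) - p (a e) = p (b f) - p (a f)"
      using unit_segment_non_gaussian_int ab[OF that(1)] ab[OF that(2)] lattice that(5) by metis
    then have "p (a e) = p (a f)" "p (b e) = p (b f)"
      by auto
    then show "e = f"
      using ab[OF that(1)] ab[OF that(2)] inj by (metis inj_on_def)
  qed
  show ?thesis
    unfolding planar_graph_def
  proof (intro exI[of _ p] exI[of _ \<gamma>] conjI ballI impI)
    fix e assume e: "e \<in> Eg"
    have "p (b e) - p (a e) \<noteq> 0"
      using ab[OF e] by auto
    then show "arc (\<gamma> e)"
      by (simp add: \<gamma>_def)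
    show "{pathstart (\<gamma> e), pathfinish (\<gamma> e)} = p ` e"
      by (simp add: \<gamma>_def image[OF e])
    have "p (a e) \<in> p ` V" "p (b e) \<in> p ` V"
      using ab[OF e] by auto
    then show "path_image (\<gamma> e) \<inter> p ` V = p ` e"
      using on_vertex[OF e] lattice by (auto simp: \<gamma>_def image[OF e])
  next
    fix e f assume ef: "e \<in> Eg" "f \<in> Eg" "e \<noteq> f"
    have "p ` e \<inter> p ` f = p ` (e \<inter> f)"
      using subset ef inj by (intro inj_on_image_Int[symmetric]) auto
    show "path_image (\<gamma> e) \<inter> path_image (\<gamma> f) = p ` (e \<inter> f)"
    proof
      show "path_image (\<gamma> e) \<inter> path_image (\<gamma> f) \<subseteq> p ` (e \<inter> f)"
        using on_vertex[OF ef(1)] on_vertex[OF ef(2)] off_vertex[OF ef(1,2)] ef(3)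
          \<open>p ` e \<inter> p ` f = p ` (e \<inter> f)\<close> by blast
      show "p ` (e \<inter> f) \<subseteq> path_image (\<gamma> e) \<inter> path_image (\<gamma> f)"
        using endpoints[OF ef(1)] endpoints[OF ef(2)] by blast
    qed
  qed (fact inj)
qed

lemma planar_graph_subgraph:
  assumes "planar_graph V Eg" "V' \<subseteq> V" "Eg' \<subseteq> Eg" "\<forall>e\<in>Eg'. e \<subseteq> V'"
  shows "planar_graph V' Eg'"
proof -
  obtain p :: "'a \<Rightarrow> complex" and \<gamma> where inj: "inj_on p V"
    and arcs: "\<forall>e\<in>Eg. arc (\<gamma> e) \<and> {pathstart (\<gamma> e), pathfinish (\<gamma> e)} = p ` e
                 \<and> path_image (\<gamma> e) \<inter> p ` V = p ` e"
    and disjoint: "\<forall>e\<in>Eg. \<forall>f\<in>Eg. e \<noteq> f \<longrightarrow> path_image (\<gamma> e) \<inter> path_image (\<gamma> f) = p ` (e \<inter> f)"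
    using assms(1) unfolding planar_graph_def by blast
  show ?thesis
    unfolding planar_graph_def
  proof (intro exI[of _ p] exI[of _ \<gamma>] conjI ballI impI)
    show "inj_on p V'"
      using inj assms(2) by (rule inj_on_subset)
    fix e assume e: "e \<in> Eg'"
    then have "e \<in> Eg" "e \<subseteq> V'"
      using assms(3,4) by auto
    then show "arc (\<gamma> e)" "{pathstart (\<gamma> e), pathfinish (\<gamma> e)} = p ` e"
      using arcs by auto
    have "path_image (\<gamma> e) \<inter> p ` V = p ` e"
      using arcs \<open>e \<in> Eg\<close> by blast
    then show "path_image (\<gamma> e) \<inter> p ` V' = p ` e"
      using assms(2) \<open>e \<subseteq> V'\<close> by blast
  next
    fix e f assume "e \<in> Eg'" "f \<in> Eg'" "e \<noteq> f"
    then show "path_image (\<gamma> e) \<inter> path_image (\<gamma> f) = p ` (e \<inter> f)"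
      using disjoint assms(3) by auto
  qed
qed

definition separation :: "'a set set \<Rightarrow> 'a set \<Rightarrow> 'a set \<Rightarrow> 'a set \<Rightarrow> 'a set \<Rightarrow> bool" where
  "separation Eg V S A B \<longleftrightarrow>
     S \<union> A \<union> B = V \<and> S \<inter> A = {} \<and> S \<inter> B = {} \<and> A \<inter> B = {}
     \<and> real (card A) \<le> 2 * real (card V) / 3 \<and> real (card B) \<le> 2 * real (card V) / 3
     \<and> (\<forall>e\<in>Eg. \<not> (e \<inter> A \<noteq> {} \<and> e \<inter> B \<noteq> {}))"

lemma separation_swap: "separation Eg V S A B \<Longrightarrow> separation Eg V S B A"
  unfolding separation_def by blast

lemma separation_edge_same_side:
  assumes "separation Eg V S A B" "{u, v} \<in> Eg" "u \<in> V - S" "v \<in> V - S"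
  shows "u \<in> A \<longleftrightarrow> v \<in> A"
proof -
  have "\<not> ({u, v} \<inter> A \<noteq> {} \<and> {u, v} \<inter> B \<noteq> {})" "u \<in> A \<union> B" "v \<in> A \<union> B" "A \<inter> B = {}"
    using assms by (auto simp: separation_def)
  then show ?thesis
    by auto
qed

lemma separation_parts_smaller:
  assumes "separation Eg C S X Y" "finite C" "real (card S) < real (card C) / 3"
  shows "0 < card (X \<union> S)" "0 < card Y" "card (X \<union> S) < card C" "card Y < card C"
    and "real (card (X \<union> S)) \<le> 2 * real (card C) / 3 + real (card S)"
    and "real (card Y) \<le> 2 * real (card C) / 3 + real (card S)"
proof -
  have parts: "X \<union> S \<union> Y = C" "(X \<union> S) \<inter> Y = {}" "X \<inter> S = {}"
    and sizes: "real (card X) \<le> 2 * real (card C) / 3" "real (card Y) \<le> 2 * real (card C) / 3"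
    using assms(1) by (auto simp: separation_def)
  have "finite X" "finite S" "finite Y"
    using assms(2) parts(1) by (auto intro: finite_subset)
  then have "card C = card (X \<union> S) + card Y" "card (X \<union> S) = card X + card S"
    using parts by (simp_all add: card_Un_disjoint flip: parts(1))
  then show "0 < card (X \<union> S)" "0 < card Y" "card (X \<union> S) < card C" "card Y < card C"
    "real (card (X \<union> S)) \<le> 2 * real (card C) / 3 + real (card S)"
    using assms(3) sizes by auto
  show "real (card Y) \<le> 2 * real (card C) / 3 + real (card S)"
    using sizes(2) by linarith
qed

lemma planar_separator_const_separation:
  assumes "planar_separator_const c"
  obtains K where "\<And>(V :: nat set) Eg. simple_graph V Eg \<Longrightarrow> planar_graph V Eg \<Longrightarrow>
    \<exists>S A B. separation Eg V S A B \<and> real (card S) \<le> c * sqrt (real (card V)) + K"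
proof -
  obtain K where K: "\<forall>(V :: nat set) Eg. simple_graph V Eg \<and> planar_graph V Eg \<longrightarrow>
        (\<exists>S A B. S \<union> A \<union> B = V \<and> S \<inter> A = {} \<and> S \<inter> B = {} \<and> A \<inter> B = {}
           \<and> real (card A) \<le> 2 * real (card V) / 3 \<and> real (card B) \<le> 2 * real (card V) / 3
           \<and> real (card S) \<le> c * sqrt (real (card V)) + K
           \<and> (\<forall>e\<in>Eg. \<not> (e \<inter> A \<noteq> {} \<and> e \<inter> B \<noteq> {})))"
    using assms unfolding planar_separator_const_def ..
  show ?thesis
  proof (rule that)
    fix V :: "nat set" and Eg
    assume "simple_graph V Eg" "planar_graph V Eg"
    then obtain S A B where "S \<union> A \<union> B = V" "S \<inter> A = {}" "S \<inter> B = {}" "A \<inter> B = {}"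
      "real (card A) \<le> 2 * real (card V) / 3" "real (card B) \<le> 2 * real (card V) / 3"
      "real (card S) \<le> c * sqrt (real (card V)) + K" "\<forall>e\<in>Eg. \<not> (e \<inter> A \<noteq> {} \<and> e \<inter> B \<noteq> {})"
      using K by (elim allE impE exE conjE) auto
    then show "\<exists>S A B. separation Eg V S A B \<and> real (card S) \<le> c * sqrt (real (card V)) + K"
      unfolding separation_def by blast
  qed
qed

definition hereditarily_separable :: "real \<Rightarrow> real \<Rightarrow> 'a set \<Rightarrow> 'a set set \<Rightarrow> bool" where
  "hereditarily_separable c K V Eg \<longleftrightarrow>
     (\<forall>C\<subseteq>V. \<exists>S A B. separation {e\<in>Eg. e \<subseteq> C} C S A B
                       \<and> real (card S) \<le> c * sqrt (real (card C)) + K)"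

lemma planar_hereditarily_separable:
  assumes "planar_separator_const c"
  obtains K where "\<And>(V :: nat set) Eg. simple_graph V Eg \<Longrightarrow> planar_graph V Eg \<Longrightarrow>
    hereditarily_separable c K V Eg"
proof -
  obtain K where K: "\<And>(V :: nat set) Eg. simple_graph V Eg \<Longrightarrow> planar_graph V Eg \<Longrightarrow>
    \<exists>S A B. separation Eg V S A B \<and> real (card S) \<le> c * sqrt (real (card V)) + K"
    using planar_separator_const_separation[OF assms] by blast
  have "hereditarily_separable c K V Eg" if "simple_graph V Eg" "planar_graph V Eg" for V :: "nat set" and Eg
    unfolding hereditarily_separable_def
  proof (intro allI impI)
    fix C assume "C \<subseteq> V"
    then have "simple_graph C {e\<in>Eg. e \<subseteq> C}" "planar_graph C {e\<in>Eg. e \<subseteq> C}"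
      using that finite_subset by (auto simp: simple_graph_def intro: planar_graph_subgraph)
    then show "\<exists>S A B. separation {e\<in>Eg. e \<subseteq> C} C S A B \<and> real (card S) \<le> c * sqrt (real (card C)) + K"
      by (rule K)
  qed
  then show ?thesis
    using that by blast
qed

definition grid_vertex :: "nat \<Rightarrow> nat \<Rightarrow> nat \<Rightarrow> nat" where
  "grid_vertex k i j = i * k + j"

definition grid_edges :: "nat \<Rightarrow> nat set set" where
  "grid_edges k =
     {{grid_vertex k i j, grid_vertex k i (Suc j)} | i j. i < k \<and> Suc j < k} \<union>
     {{grid_vertex k i j, grid_vertex k (Suc i) j} | i j. Suc i < k \<and> j < k}"

lemma grid_vertex_less: "i < k \<Longrightarrow> j < k \<Longrightarrow> grid_vertex k i j < k * k"
proof -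
  assume "i < k" "j < k"
  then have "i * k + j < Suc i * k"
    by simp
  also have "\<dots> \<le> k * k"
    using \<open>i < k\<close> by (intro mult_right_mono) auto
  finally show ?thesis
    by (simp add: grid_vertex_def)
qed

lemma grid_vertex_div [simp]: "j < k \<Longrightarrow> grid_vertex k i j div k = i"
  by (simp add: grid_vertex_def)

lemma grid_vertex_mod [simp]: "j < k \<Longrightarrow> grid_vertex k i j mod k = j"
  by (simp add: grid_vertex_def)

lemma grid_edge_right: "i < k \<Longrightarrow> Suc j < k \<Longrightarrow> {grid_vertex k i j, grid_vertex k i (Suc j)} \<in> grid_edges k"
  unfolding grid_edges_def by blast

lemma grid_edge_down: "Suc i < k \<Longrightarrow> j < k \<Longrightarrow> {grid_vertex k i j, grid_vertex k (Suc i) j} \<in> grid_edges k"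
  unfolding grid_edges_def by blast

lemma grid_edgesE:
  assumes "e \<in> grid_edges k"
  obtains i j where "i < k" "Suc j < k" "e = {grid_vertex k i j, grid_vertex k i (Suc j)}"
    | i j where "Suc i < k" "j < k" "e = {grid_vertex k i j, grid_vertex k (Suc i) j}"
  using assms unfolding grid_edges_def by blast

lemma grid_planar: "planar_graph {..<k * k} (grid_edges k)"
proof (rule planar_graph_lattice_embedding)
  let ?p = "\<lambda>v. Complex (real (v div k)) (real (v mod k))"
  show "inj_on ?p {..<k * k}"
    by (rule inj_onI) (metis complex.inject div_mod_decomp of_nat_eq_iff)
  show "gaussian_int (?p v)" for v
    by (simp add: gaussian_int_def)
  fix e assume "e \<in> grid_edges k"
  then show "\<exists>a\<in>{..<k * k}. \<exists>b\<in>{..<k * k}. e = {a, b} \<and> ?p b - ?p a \<in> {1, \<i>}"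
  proof (cases rule: grid_edgesE)
    case (1 i j)
    then show ?thesis
      using grid_vertex_less[of i k j] grid_vertex_less[of i k "Suc j"]
      by (intro bexI[of _ "grid_vertex k i j"] bexI[of _ "grid_vertex k i (Suc j)"])
        (auto simp: complex_eq_iff)
  next
    case (2 i j)
    then show ?thesis
      using grid_vertex_less[of i k j] grid_vertex_less[of "Suc i" k j]
      by (intro bexI[of _ "grid_vertex k i j"] bexI[of _ "grid_vertex k (Suc i) j"])
        (auto simp: complex_eq_iff)
  qed
qed

lemma grid_simple_graph: "simple_graph {..<k * k} (grid_edges k)"
proof -
  have "e \<subseteq> {..<k * k} \<and> card e = 2" if "e \<in> grid_edges k" for e
    using that
  proof (cases rule: grid_edgesE)
    case (1 i j)
    then show ?thesis
      using grid_vertex_less[of i k j] grid_vertex_less[of i k "Suc j"] by (auto simp: grid_vertex_def)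
  next
    case (2 i j)
    then show ?thesis
      using grid_vertex_less[of i k j] grid_vertex_less[of "Suc i" k j] by (auto simp: grid_vertex_def)
  qed
  then show ?thesis
    by (simp add: simple_graph_def)
qed

lemma iff_chain:
  assumes "\<And>i. Suc i < m \<Longrightarrow> P i \<longleftrightarrow> P (Suc i)" "i < m"
  shows "P i \<longleftrightarrow> P 0"
  using assms(2) by (induction i) (auto simp: assms(1))

lemma grid_rows_one_side:
  assumes sep: "separation (grid_edges k) {..<k * k} S A B"
    and column: "j0 < k" "\<And>i. grid_vertex k i j0 \<notin> S"
  defines "R \<equiv> {i. i < k \<and> (\<forall>j<k. grid_vertex k i j \<notin> S)}"
  shows "(\<lambda>(i, j). grid_vertex k i j) ` (R \<times> {..<k}) \<subseteq> A \<or>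
    (\<lambda>(i, j). grid_vertex k i j) ` (R \<times> {..<k}) \<subseteq> B"
proof -
  have in_A_or_B: "grid_vertex k i j \<in> A \<union> B" if "i < k" "j < k" "grid_vertex k i j \<notin> S" for i j
    using sep that grid_vertex_less[of i k j] by (auto simp: separation_def)
  have same_side: "grid_vertex k i j \<in> A \<longleftrightarrow> grid_vertex k i' j' \<in> A"
    if "{grid_vertex k i j, grid_vertex k i' j'} \<in> grid_edges k"
      "grid_vertex k i j \<notin> S" "grid_vertex k i' j' \<notin> S" "i < k" "j < k" "i' < k" "j' < k"
    for i j i' j'
    using that grid_vertex_less[of i k j] grid_vertex_less[of i' k j']
    by (intro separation_edge_same_side[OF sep that(1)]) auto
  have column_side: "grid_vertex k i j0 \<in> A \<longleftrightarrow> grid_vertex k 0 j0 \<in> A" if "i < k" for i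
  proof (rule iff_chain[where P = "\<lambda>i. grid_vertex k i j0 \<in> A" and m = k])
    fix i assume "Suc i < k"
    then show "grid_vertex k i j0 \<in> A \<longleftrightarrow> grid_vertex k (Suc i) j0 \<in> A"
      using column by (intro same_side grid_edge_down) auto
  qed (use that in simp)
  have row_side: "grid_vertex k i j \<in> A \<longleftrightarrow> grid_vertex k i 0 \<in> A" if "i \<in> R" "j < k" for i j
  proof (rule iff_chain[where P = "\<lambda>j. grid_vertex k i j \<in> A" and m = k])
    fix j assume "Suc j < k"
    then show "grid_vertex k i j \<in> A \<longleftrightarrow> grid_vertex k i (Suc j) \<in> A"
      using \<open>i \<in> R\<close> by (intro same_side grid_edge_right) (auto simp: R_def)
  qed (use that in simp)
  have one_side: "grid_vertex k i j \<in> A \<longleftrightarrow> grid_vertex k 0 j0 \<in> A"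
    and in_A_or_B': "grid_vertex k i j \<in> A \<union> B" if "i \<in> R" "j < k" for i j
    using that row_side[OF that] row_side[OF that(1) column(1)] column_side[of i] in_A_or_B[of i j]
    by (auto simp: R_def)
  show ?thesis
  proof (cases "grid_vertex k 0 j0 \<in> A")
    case True
    then show ?thesis
      using one_side by auto
  next
    case False
    then show ?thesis
      using one_side in_A_or_B' by fastforce
  qed
qed

lemma grid_separator_large:
  assumes sep: "separation (grid_edges k) {..<k * k} S A B"
  shows "k \<le> 3 * card S"
proof (cases "card S < k")
  case True
  have finite: "finite S" "finite A" "finite B"
    using sep finite_subset[of _ "{..<k * k}"] by (auto simp: separation_def)
  have sizes: "real (card A) \<le> 2 * real (k * k) / 3" "real (card B) \<le> 2 * real (k * k) / 3"
    using sep by (simp_all add: separation_def)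
  obtain j0 where j0: "j0 < k" "j0 \<notin> (\<lambda>v. v mod k) ` S"
  proof -
    have "card ((\<lambda>v. v mod k) ` S) < k"
      using card_image_le[OF finite(1), of "\<lambda>v. v mod k"] True by linarith
    then have "\<not> {..<k} \<subseteq> (\<lambda>v. v mod k) ` S"
      using card_mono[OF finite_imageI[OF finite(1)]] by (metis card_lessThan not_le)
    then show ?thesis
      using that by auto
  qed
  have free_column: "grid_vertex k i j0 \<notin> S" for i
    using j0 grid_vertex_mod[OF j0(1), of i] by force
  define R where "R = {i. i < k \<and> (\<forall>j<k. grid_vertex k i j \<notin> S)}"
  define G where "G = (\<lambda>(i, j). grid_vertex k i j) ` (R \<times> {..<k})"
  have "G \<subseteq> A \<or> G \<subseteq> B"
    using grid_rows_one_side[OF sep j0(1) free_column] unfolding G_def R_def .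
  then have "card G \<le> card A \<or> card G \<le> card B"
    using card_mono[OF finite(2)] card_mono[OF finite(3)] by blast
  moreover have "inj_on (\<lambda>(i, j). grid_vertex k i j) (R \<times> {..<k})"
    by (rule inj_onI) (clarsimp, metis grid_vertex_div grid_vertex_mod)
  then have "card G = card R * k"
    by (simp add: G_def card_image card_cartesian_product)
  ultimately have "real (card R * k) \<le> real (card A) \<or> real (card R * k) \<le> real (card B)"
    by (simp only: of_nat_le_iff)
  then have "real (card R * k) \<le> 2 * real (k * k) / 3"
    using sizes by linarith
  then have "3 * card R \<le> 2 * k"
    using True by (simp add: field_simps)
  moreover have "k \<le> card R + card S"
  proof -
    have "{..<k} - R \<subseteq> (\<lambda>v. v div k) ` S"
    proof
      fix i assume "i \<in> {..<k} - R"
      then obtain j where "j < k" "grid_vertex k i j \<in> S"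
        by (auto simp: R_def)
      then show "i \<in> (\<lambda>v. v div k) ` S"
        by (intro image_eqI[where x = "grid_vertex k i j"]) simp_all
    qed
    then have "card ({..<k} - R) \<le> card ((\<lambda>v. v div k) ` S)"
      using finite(1) by (intro card_mono) auto
    also have "\<dots> \<le> card S"
      by (rule card_image_le[OF finite(1)])
    finally have "card ({..<k} - R) \<le> card S" .
    then show ?thesis
      using card_Diff_subset[of R "{..<k}"] card_mono[of "{..<k}" R] by (simp add: R_def subset_eq)
  qed
  ultimately show ?thesis
    by linarith
qed simp

lemma planar_separator_const_pos:
  assumes "planar_separator_const c"
  shows "c > 0"
proof (rule ccontr)
  assume "\<not> c > 0"
  obtain K where K: "\<And>(V :: nat set) Eg. simple_graph V Eg \<Longrightarrow> planar_graph V Eg \<Longrightarrow>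
    \<exists>S A B. separation Eg V S A B \<and> real (card S) \<le> c * sqrt (real (card V)) + K"
    using planar_separator_const_separation[OF assms] by blast
  define k where "k = nat \<lceil>3 * K\<rceil> + 1"
  obtain S A B where "separation (grid_edges k) {..<k * k} S A B"
    and "real (card S) \<le> c * sqrt (real (card {..<k * k})) + K"
    using K[OF grid_simple_graph grid_planar] by blast
  then have "real (card S) \<le> K"
    using \<open>\<not> c > 0\<close> by (smt (verit) mult_nonpos_nonneg real_sqrt_ge_zero of_nat_0_le_iff)
  moreover have "real k \<le> 3 * real (card S)"
    using grid_separator_large[OF \<open>separation _ _ S A B\<close>] by linarith
  ultimately show False
    unfolding k_def by linarith
qed

section \<open>Sequences of pairwise merges\<close>

text \<open>Like \<^const>\<open>valid_steps\<close>, but ending in an arbitrary partition, so that merge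
  sequences compose.\<close>

inductive merges :: "'a set set \<Rightarrow> ('a set \<times> 'a set) list \<Rightarrow> 'a set set \<Rightarrow> bool" where
  merges_Nil: "merges P [] P"
| merges_Cons: "A \<in> P \<Longrightarrow> B \<in> P \<Longrightarrow> A \<noteq> B \<Longrightarrow> merges (insert (A \<union> B) (P - {A, B})) s Q
    \<Longrightarrow> merges P ((A, B) # s) Q"

lemma merges_append: "merges P s Q \<Longrightarrow> merges Q t R \<Longrightarrow> merges P (s @ t) R"
  by (induction rule: merges.induct) (auto intro: merges.intros)

lemma valid_steps_if_merges: "merges P s Q \<Longrightarrow> card Q = 1 \<Longrightarrow> valid_steps P s"
  by (induction rule: merges.induct) auto

lemma merges_length:
  assumes "merges P s Q" "finite P"
  shows "length s + card Q \<le> card P"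
  using assms
proof (induction rule: merges.induct)
  case (merges_Cons A P B s Q)
  have "card {A, B} \<le> card P"
    using merges_Cons.hyps(1,2) merges_Cons.prems by (intro card_mono) auto
  then have "card (P - {A, B}) + 2 = card P"
    using merges_Cons.hyps(1-3) merges_Cons.prems by (simp add: card_Diff_subset)
  moreover have "card (insert (A \<union> B) (P - {A, B})) \<le> card (P - {A, B}) + 1"
    by (simp add: card_insert_le_m1)
  ultimately show ?case
    using merges_Cons.IH merges_Cons.prems by simp
qed simp

lemma merges_blocks_subset: "merges P s Q \<Longrightarrow> (A, B) \<in> set s \<Longrightarrow> A \<union> B \<subseteq> \<Union>P"
proof (induction arbitrary: A B rule: merges.induct)
  case (merges_Cons A' P B' s Q)
  have union: "\<Union>(insert (A' \<union> B') (P - {A', B'})) = \<Union>P"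
    using merges_Cons.hyps(1,2) by blast
  consider "(A, B) = (A', B')" | "(A, B) \<in> set s"
    using merges_Cons.prems by auto
  then show ?case
  proof cases
    case 1
    then show ?thesis
      using merges_Cons.hyps(1,2) by auto
  next
    case 2
    then show ?thesis
      using merges_Cons.IH union by metis
  qed
qed simp

lemma merges_Un:
  assumes "merges P s Q" "{} \<notin> P" "\<Union>P \<inter> \<Union>R = {}"
  shows "merges (P \<union> R) s (Q \<union> R)"
  using assms
proof (induction rule: merges.induct)
  case (merges_Cons A P B s Q)
  have "X \<notin> R" if "X \<in> P" for X
  proof
    assume "X \<in> R"
    then have "X \<subseteq> \<Union>P \<inter> \<Union>R"
      using that by blast
    then show False
      using that merges_Cons.prems by auto
  qed
  then have "A \<notin> R" "B \<notin> R"
    using merges_Cons.hyps(1,2) by auto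
  then have eq: "insert (A \<union> B) (P \<union> R - {A, B}) = insert (A \<union> B) (P - {A, B}) \<union> R"
    by auto
  have "{} \<notin> insert (A \<union> B) (P - {A, B})"
    using merges_Cons.hyps(1) merges_Cons.prems(1) by auto
  moreover have "\<Union>(insert (A \<union> B) (P - {A, B})) \<inter> \<Union>R = {}"
    using merges_Cons.hyps(1,2) merges_Cons.prems(2) by auto
  ultimately have "merges (insert (A \<union> B) (P \<union> R - {A, B})) s (Q \<union> R)"
    unfolding eq by (rule merges_Cons.IH)
  then show ?case
    using merges_Cons.hyps(1-3) by (intro merges.merges_Cons) auto
qed (rule merges.merges_Nil)

definition singletons :: "'a set \<Rightarrow> 'a set set" where
  "singletons C = (\<lambda>v. {v}) ` C"

lemma merges_singletons_Un:
  assumes "merges (singletons X) sx {X}" "merges (singletons Y) sy {Y}"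
    and "X \<inter> Y = {}" "X \<noteq> {}" "Y \<noteq> {}"
  shows "merges (singletons (X \<union> Y)) (sx @ sy @ [(X, Y)]) {X \<union> Y}"
proof -
  have "merges (singletons X \<union> singletons Y) sx ({X} \<union> singletons Y)"
    by (rule merges_Un[OF assms(1)]) (use assms(3) in \<open>auto simp: singletons_def\<close>)
  moreover have "merges (singletons Y \<union> {X}) sy ({Y} \<union> {X})"
    by (rule merges_Un[OF assms(2)]) (use assms(3) in \<open>auto simp: singletons_def\<close>)
  moreover have "merges {X, Y} [(X, Y)] {X \<union> Y}"
  proof (rule merges.merges_Cons)
    show "X \<noteq> Y"
      using assms(3,4) by blast
    show "merges (insert (X \<union> Y) ({X, Y} - {X, Y})) [] {X \<union> Y}"
      by (simp add: merges.merges_Nil)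
  qed simp_all
  ultimately have "merges (singletons X \<union> singletons Y) (sx @ sy @ [(X, Y)]) {X \<union> Y}"
    by (simp add: Un_commute insert_commute merges_append)
  then show ?thesis
    by (simp add: singletons_def image_Un)
qed

lemma merges_singletons_exists:
  assumes "finite C" "C \<noteq> {}"
  shows "\<exists>s. merges (singletons C) s {C}"
  using assms
proof (induction rule: finite_ne_induct)
  case (singleton x)
  show ?case
    using merges_Nil by (auto simp: singletons_def)
next
  case (insert x F)
  then obtain s where "merges (singletons F) s {F}"
    by blast
  then have "merges (singletons (F \<union> {x})) (s @ [] @ [(F, {x})]) {F \<union> {x}}"
    using insert.hyps by (intro merges_singletons_Un) (auto simp: singletons_def merges_Nil)
  then show ?case
    by auto
qed

lemma steps_cost_le:
  assumes "\<forall>(A, B)\<in>set s. real (pair_cost E ends d A B) \<le> c"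
  shows "real (steps_cost E ends d s) \<le> real (length s) * c"
  using assms by (induction s) (auto simp: algebra_simps)

section \<open>Contraction along separators\<close>

lemma card_pair_Int_eq_1: "a \<noteq> b \<Longrightarrow> card ({a, b} \<inter> Z) = 1 \<longleftrightarrow> (a \<in> Z \<longleftrightarrow> b \<notin> Z)"
  by (cases "a \<in> Z"; cases "b \<in> Z") (auto simp: Int_insert_left)

lemma square_le_powr_add:
  fixes x y p :: nat and m b s :: real
  assumes "x \<le> y * p" "real y ^ 2 \<le> m powr b" "real p ^ 2 \<le> m powr s"
  shows "real x ^ 2 \<le> m powr (b + s)"
proof -
  have "real x ^ 2 \<le> (real y * real p) ^ 2"
    using assms(1) by (simp add: power_mono flip: of_nat_mult)
  also have "\<dots> = real y ^ 2 * real p ^ 2"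
    by (simp add: power_mult_distrib)
  also have "\<dots> \<le> m powr b * m powr s"
    using assms(2,3) by (intro mult_mono) auto
  finally show ?thesis
    by (simp add: powr_add)
qed

locale closed_tensor_network =
  fixes n :: nat and E :: "'e set" and ends :: "'e \<Rightarrow> nat set" and d :: "'e \<Rightarrow> nat" and M :: nat
  assumes tensor_network: "tensor_network n E ends d M"
begin

lemma finite_E: "finite E"
  using tensor_network by (simp add: tensor_network_def)

lemma ends_subset: "e \<in> E \<Longrightarrow> ends e \<subseteq> {..<n}"
  using tensor_network by (simp add: tensor_network_def)

lemma ends_pair:
  assumes "e \<in> E"
  obtains a b where "a \<noteq> b" "ends e = {a, b}"
  using tensor_network assms by (auto simp: tensor_network_def card_2_iff)

lemma dim_ge_1: "e \<in> E \<Longrightarrow> 1 \<le> d e"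
  using tensor_network by (simp add: tensor_network_def)

lemma simple_graph_underlying: "simple_graph {..<n} (underlying_edges E ends)"
  using tensor_network by (auto simp: simple_graph_def underlying_edges_def tensor_network_def)

definition dim_prod :: "'e set \<Rightarrow> nat" where
  "dim_prod F = (\<Prod>e\<in>F. d e)"

lemma dim_prod_mono:
  assumes "F \<subseteq> G" "G \<subseteq> E"
  shows "dim_prod F \<le> dim_prod G"
proof -
  have "finite G"
    using assms(2) finite_E finite_subset by blast
  then have "dim_prod G = (\<Prod>e\<in>G - F. d e) * dim_prod F"
    using assms(1) by (simp add: dim_prod_def prod.subset_diff)
  moreover have "1 \<le> (\<Prod>e\<in>G - F. d e)"
    using assms(2) dim_ge_1 by (intro prod_ge_1) auto
  ultimately show ?thesis
    by simp
qed

lemma dim_prod_Un_le: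
  assumes "F \<subseteq> E" "G \<subseteq> E"
  shows "dim_prod (F \<union> G) \<le> dim_prod F * dim_prod G"
proof -
  have "finite F" "finite G"
    using assms finite_E finite_subset by blast+
  then have "dim_prod (F \<union> G) * dim_prod (F \<inter> G) = dim_prod F * dim_prod G"
    by (simp add: dim_prod_def prod.union_inter)
  moreover have "1 \<le> dim_prod (F \<inter> G)"
    using assms dim_ge_1 unfolding dim_prod_def by (intro prod_ge_1) auto
  ultimately show ?thesis
    by (metis le_add1 mult_le_mono2 mult.comm_neutral less_eqE)
qed

lemma dim_prod_incident_le:
  assumes "finite T" "T \<subseteq> {..<n}" "F \<subseteq> E" "\<forall>e\<in>F. ends e \<inter> T \<noteq> {}"
  shows "dim_prod F \<le> M ^ card T"
  using assms
proof (induction T arbitrary: F rule: finite_induct)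
  case (insert v T)
  define F\<^sub>v where "F\<^sub>v = {e\<in>F. v \<in> ends e}"
  have "dim_prod F\<^sub>v \<le> tensor_entries E ends d v"
    unfolding tensor_entries_def dim_prod_def[symmetric]
    using insert.prems(2) by (intro dim_prod_mono) (auto simp: F\<^sub>v_def)
  also have "\<dots> \<le> M"
    using tensor_network insert.prems(1) by (simp add: tensor_network_def)
  finally have "dim_prod F\<^sub>v \<le> M" .
  moreover have "dim_prod (F - F\<^sub>v) \<le> M ^ card T"
    using insert.prems by (intro insert.IH) (auto simp: F\<^sub>v_def)
  moreover have "finite F"
    using insert.prems(2) finite_E finite_subset by blast
  then have "dim_prod F = dim_prod (F - F\<^sub>v) * dim_prod F\<^sub>v"
    unfolding dim_prod_def by (rule prod.subset_diff[rotated]) (auto simp: F\<^sub>v_def)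
  ultimately show ?case
    using insert.hyps by (simp add: mult_le_mono mult.commute)
qed (simp add: dim_prod_def)

abbreviation open_idx :: "nat set \<Rightarrow> 'e set" where
  "open_idx C \<equiv> open_indices E ends C"

lemma open_idx_subset: "open_idx C \<subseteq> E"
  by (auto simp: open_indices_def)

lemma open_idx_meets: "e \<in> open_idx C \<Longrightarrow> ends e \<inter> C \<noteq> {}"
  by (auto simp: open_indices_def)

lemma open_idx_all: "open_idx {..<n} = {}"
  using ends_subset tensor_network by (auto simp: open_indices_def tensor_network_def Int_absorb2)

definition crossing :: "nat set \<Rightarrow> nat set \<Rightarrow> 'e set" where
  "crossing S Y = {e\<in>E. ends e \<inter> S \<noteq> {} \<and> ends e \<inter> Y \<noteq> {}}"

lemma dim_prod_crossing_le:
  assumes "S \<subseteq> {..<n}" "S \<inter> X = {}" "S \<inter> Y = {}" "X \<inter> Y = {}"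
  shows "dim_prod (crossing S X) * dim_prod (crossing S Y) \<le> M ^ card S"
proof -
  have "crossing S X \<inter> crossing S Y = {}"
  proof (intro equalityI subsetI)
    fix e assume e: "e \<in> crossing S X \<inter> crossing S Y"
    then have "e \<in> E"
      by (simp add: crossing_def)
    then obtain a b where "ends e = {a, b}"
      by (rule ends_pair)
    then show "e \<in> {}"
      using e assms(2-4) by (auto simp: crossing_def)
  qed simp
  then have "dim_prod (crossing S X) * dim_prod (crossing S Y) = dim_prod (crossing S X \<union> crossing S Y)"
    using finite_E by (simp add: dim_prod_def crossing_def prod.union_disjoint)
  also have "\<dots> \<le> M ^ card S"
    using assms(1) finite_subset by (intro dim_prod_incident_le) (auto simp: crossing_def)
  finally show ?thesis .
qed

lemma separation_balanced_side:
  assumes "separation Eg C S A B" "S \<subseteq> {..<n}" "1 \<le> M"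
  obtains X Y where "separation Eg C S X Y"
    "real (dim_prod (crossing S Y)) ^ 2 \<le> real M powr real (card S)"
proof -
  have "S \<inter> A = {}" "S \<inter> B = {}" "A \<inter> B = {}"
    using assms(1) by (auto simp: separation_def)
  then have "dim_prod (crossing S A) * dim_prod (crossing S B) \<le> M ^ card S"
    by (rule dim_prod_crossing_le[OF assms(2)])
  then have "real (dim_prod (crossing S A) * dim_prod (crossing S B)) \<le> real (M ^ card S)"
    by (simp only: of_nat_le_iff)
  also have "\<dots> = real M powr real (card S)"
    using assms(3) by (simp add: powr_realpow)
  finally have product: "real (dim_prod (crossing S A) * dim_prod (crossing S B)) \<le> real M powr real (card S)" .
  have square_le: "real x ^ 2 \<le> real (x * y)" if "x \<le> y" for x y :: nat
    using mult_le_mono2[OF that, of x] by (simp add: power2_eq_square flip: of_nat_mult)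
  show ?thesis
  proof (cases "dim_prod (crossing S B) \<le> dim_prod (crossing S A)")
    case True
    then show ?thesis
      using that[OF assms(1)] product square_le by (metis mult.commute order_trans)
  next
    case False
    then show ?thesis
      using that[OF separation_swap[OF assms(1)]] product square_le by (metis nle_le order_trans)
  qed
qed

lemma open_idx_separation:
  assumes "separation {f \<in> underlying_edges E ends. f \<subseteq> C} C S X Y"
  shows "open_idx (X \<union> S) \<union> open_idx Y \<subseteq> open_idx C \<union> crossing S Y"
proof
  fix e assume e: "e \<in> open_idx (X \<union> S) \<union> open_idx Y"
  then have "e \<in> E"
    using open_idx_subset by blast
  then obtain a b where ab: "a \<noteq> b" "ends e = {a, b}"
    by (rule ends_pair)
  have "S \<union> X \<union> Y = C" "S \<inter> X = {}" "S \<inter> Y = {}" "X \<inter> Y = {}"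
    and "ends e \<subseteq> C \<Longrightarrow> \<not> (ends e \<inter> X \<noteq> {} \<and> ends e \<inter> Y \<noteq> {})"
    using assms \<open>e \<in> E\<close> by (auto simp: separation_def underlying_edges_def)
  then show "e \<in> open_idx C \<union> crossing S Y"
    using e ab \<open>e \<in> E\<close> card_pair_Int_eq_1[OF ab(1)]
    by (auto simp: open_indices_def crossing_def)
qed

lemma square_dim_prod_le_powr_add:
  assumes "F \<subseteq> open_idx C \<union> crossing S Y"
    and "real (dim_prod (open_idx C)) ^ 2 \<le> real M powr b"
    and "real (dim_prod (crossing S Y)) ^ 2 \<le> real M powr t"
  shows "real (dim_prod F) ^ 2 \<le> real M powr (b + t)"
proof (rule square_le_powr_add[OF _ assms(2,3)])
  have "dim_prod F \<le> dim_prod (open_idx C \<union> crossing S Y)"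
    using assms(1) open_idx_subset by (intro dim_prod_mono) (auto simp: crossing_def)
  also have "\<dots> \<le> dim_prod (open_idx C) * dim_prod (crossing S Y)"
    using open_idx_subset by (intro dim_prod_Un_le) (auto simp: crossing_def)
  finally show "dim_prod F \<le> dim_prod (open_idx C) * dim_prod (crossing S Y)" .
qed

definition contracts_within :: "real \<Rightarrow> nat set \<Rightarrow> (nat set \<times> nat set) list \<Rightarrow> bool" where
  "contracts_within L C s \<longleftrightarrow> merges (singletons C) s {C} \<and>
     (\<forall>(A, B)\<in>set s. real (dim_prod (open_idx A \<union> open_idx B)) ^ 2 \<le> real M powr L)"

lemma contracts_within_small:
  assumes "1 \<le> M" "C \<subseteq> {..<n}" "C \<noteq> {}" "2 * real (card C) \<le> L"
  shows "\<exists>s. contracts_within L C s"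
proof -
  have "finite C"
    using assms(2) finite_subset by blast
  then obtain s where s: "merges (singletons C) s {C}"
    using merges_singletons_exists assms(3) by blast
  have "real (dim_prod (open_idx A \<union> open_idx B)) ^ 2 \<le> real M powr L" if "(A, B) \<in> set s" for A B
  proof -
    have "A \<union> B \<subseteq> C"
      using merges_blocks_subset[OF s that] by (simp add: singletons_def)
    then have "dim_prod (open_idx A \<union> open_idx B) \<le> M ^ card C"
      using assms(2) \<open>finite C\<close> open_idx_subset open_idx_meets
      by (intro dim_prod_incident_le) blast+
    then have "real (dim_prod (open_idx A \<union> open_idx B)) \<le> real M ^ card C"
      by (metis of_nat_le_iff of_nat_power)
    then have "real (dim_prod (open_idx A \<union> open_idx B)) ^ 2 \<le> (real M ^ card C) ^ 2"
      by (rule power_mono) simp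
    also have "\<dots> = real M ^ (card C * 2)"
      by (rule power_mult[symmetric])
    also have "\<dots> = real M powr real (card C * 2)"
      using assms(1) by (intro powr_realpow[symmetric]) simp
    also have "\<dots> \<le> real M powr L"
      using assms(1,4) by (intro powr_mono) simp_all
    finally show ?thesis .
  qed
  then show ?thesis
    using s by (auto simp: contracts_within_def)
qed

lemma contracts_within_Un:
  assumes "contracts_within L X sx" "contracts_within L Y sy" "X \<inter> Y = {}" "X \<noteq> {}" "Y \<noteq> {}"
    and "real (dim_prod (open_idx X \<union> open_idx Y)) ^ 2 \<le> real M powr L"
  shows "contracts_within L (X \<union> Y) (sx @ sy @ [(X, Y)])"
  using assms merges_singletons_Un[of X sx Y sy] by (auto simp: contracts_within_def)

lemma contracts_within_split:
  assumes IH: "\<And>C' b'. card C' < card C \<Longrightarrow> C' \<subseteq> {..<n} \<Longrightarrow> C' \<noteq> {} \<Longrightarrow>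
      real (dim_prod (open_idx C')) ^ 2 \<le> real M powr b' \<Longrightarrow> b' + \<Phi> (real (card C')) \<le> \<Omega> \<Longrightarrow>
      \<exists>s. contracts_within L C' s"
    and "1 \<le> M" "C \<subseteq> {..<n}"
    and sep: "separation {f \<in> underlying_edges E ends. f \<subseteq> C} C S X Y"
    and crossing: "real (dim_prod (crossing S Y)) ^ 2 \<le> real M powr real (card S)"
    and size: "real (dim_prod (open_idx C)) ^ 2 \<le> real M powr b"
    and budget: "b + \<Phi> (real (card C)) \<le> \<Omega>"
    and small: "real (card S) < real (card C) / 3"
    and final: "b + real (card S) \<le> L"
    and decrease: "\<And>m'. 1 \<le> m' \<Longrightarrow> m' \<le> 2 * real (card C) / 3 + real (card S) \<Longrightarrow>
      \<Phi> m' + real (card S) \<le> \<Phi> (real (card C))"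
  shows "\<exists>s. contracts_within L C s"
proof -
  have parts: "X \<union> S \<union> Y = C" "(X \<union> S) \<inter> Y = {}"
    using sep by (auto simp: separation_def)
  have "finite C"
    using \<open>C \<subseteq> {..<n}\<close> finite_subset by blast
  note smaller = separation_parts_smaller[OF sep this small]
  then have nonempty: "X \<union> S \<noteq> {}" "Y \<noteq> {}"
    by auto
  have subsets: "X \<union> S \<subseteq> {..<n}" "Y \<subseteq> {..<n}"
    using parts(1) \<open>C \<subseteq> {..<n}\<close> by auto
  have split: "open_idx (X \<union> S) \<union> open_idx Y \<subseteq> open_idx C \<union> crossing S Y"
    using sep by (rule open_idx_separation)
  have "real (dim_prod (open_idx (X \<union> S))) ^ 2 \<le> real M powr (b + real (card S))"
    "real (dim_prod (open_idx Y)) ^ 2 \<le> real M powr (b + real (card S))"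
    using split size crossing by (auto intro: square_dim_prod_le_powr_add)
  moreover have "b + real (card S) + \<Phi> (real (card (X \<union> S))) \<le> \<Omega>"
    "b + real (card S) + \<Phi> (real (card Y)) \<le> \<Omega>"
    using decrease[of "real (card (X \<union> S))"] decrease[of "real (card Y)"] smaller budget
    by (simp_all add: Suc_le_eq)
  ultimately obtain s\<^sub>1 s\<^sub>2 where "contracts_within L (X \<union> S) s\<^sub>1" "contracts_within L Y s\<^sub>2"
    using IH smaller(3,4) subsets nonempty by meson
  moreover have "real (dim_prod (open_idx (X \<union> S) \<union> open_idx Y)) ^ 2 \<le> real M powr L"
  proof -
    have "real M powr (b + real (card S)) \<le> real M powr L"
      using final \<open>1 \<le> M\<close> by (intro powr_mono) auto
    then show ?thesis
      using square_dim_prod_le_powr_add[OF split size crossing] by linarith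
  qed
  ultimately have "contracts_within L ((X \<union> S) \<union> Y) (s\<^sub>1 @ s\<^sub>2 @ [(X \<union> S, Y)])"
    using nonempty parts(2) by (intro contracts_within_Un)
  then show ?thesis
    unfolding parts(1) by blast
qed

end

text \<open>A cluster C is contracted with a budget b: the squared size of its tensor is at most
  \<open>M powr b\<close>, and \<open>b + \<Phi> |C| \<le> \<Omega>\<close>. Clusters with \<open>2 |C| \<le> L\<close> are contracted naively; for the
  others these conditions keep the budget invariant through a separator step and keep the final
  merge within \<open>M powr L\<close>.\<close>

definition admissible_potential :: "real \<Rightarrow> real \<Rightarrow> real \<Rightarrow> real \<Rightarrow> (real \<Rightarrow> real) \<Rightarrow> bool" where
  "admissible_potential c K L \<Omega> \<Phi> \<longleftrightarrow>
     (\<forall>m\<ge>1. L < 2 * m \<longrightarrow>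
        c * sqrt m + K < m / 3 \<and> \<Omega> - \<Phi> m + c * sqrt m + K \<le> L \<and>
        (\<forall>s m'. 0 \<le> s \<longrightarrow> s \<le> c * sqrt m + K \<longrightarrow> 1 \<le> m' \<longrightarrow> m' \<le> 2 * m / 3 + s \<longrightarrow>
           \<Phi> m' + s \<le> \<Phi> m))"

context closed_tensor_network
begin

lemma contracts_within_exists:
  assumes sep: "hereditarily_separable c K {..<n} (underlying_edges E ends)"
    and "1 \<le> M" and pot: "admissible_potential c K L \<Omega> \<Phi>"
  shows "C \<subseteq> {..<n} \<Longrightarrow> C \<noteq> {} \<Longrightarrow> real (dim_prod (open_idx C)) ^ 2 \<le> real M powr b \<Longrightarrow>
    b + \<Phi> (real (card C)) \<le> \<Omega> \<Longrightarrow> \<exists>s. contracts_within L C s"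
proof (induction "card C" arbitrary: C b rule: less_induct)
  case less
  show ?case
  proof (cases "2 * real (card C) \<le> L")
    case True
    then show ?thesis
      using contracts_within_small \<open>1 \<le> M\<close> less.prems(1,2) by simp
  next
    case False
    have "1 \<le> real (card C)"
      using less.prems(1,2) finite_subset by (fastforce simp: Suc_le_eq card_gt_0_iff)
    then have small: "c * sqrt (card C) + K < real (card C) / 3"
      and final: "\<Omega> - \<Phi> (card C) + c * sqrt (card C) + K \<le> L"
      and decrease: "\<And>s m'. 0 \<le> s \<Longrightarrow> s \<le> c * sqrt (card C) + K \<Longrightarrow> 1 \<le> m' \<Longrightarrow>
        m' \<le> 2 * real (card C) / 3 + s \<Longrightarrow> \<Phi> m' + s \<le> \<Phi> (card C)"
      using pot False unfolding admissible_potential_def by auto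
    obtain S A B where sep\<^sub>C: "separation {f \<in> underlying_edges E ends. f \<subseteq> C} C S A B"
      and S: "real (card S) \<le> c * sqrt (card C) + K"
      using sep less.prems(1) unfolding hereditarily_separable_def by meson
    moreover have "S \<subseteq> {..<n}"
      using sep\<^sub>C less.prems(1) by (auto simp: separation_def)
    ultimately obtain X Y where sep\<^sub>X\<^sub>Y: "separation {f \<in> underlying_edges E ends. f \<subseteq> C} C S X Y"
      and crossing: "real (dim_prod (crossing S Y)) ^ 2 \<le> real M powr real (card S)"
      using separation_balanced_side[OF sep\<^sub>C \<open>S \<subseteq> {..<n}\<close> \<open>1 \<le> M\<close>] by blast
    have small\<^sub>S: "real (card S) < real (card C) / 3" and final\<^sub>S: "b + real (card S) \<le> L"
      using small final S less.prems(4) by linarith+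
    have decrease\<^sub>S: "\<Phi> m' + real (card S) \<le> \<Phi> (card C)"
      if "1 \<le> m'" "m' \<le> 2 * real (card C) / 3 + real (card S)" for m'
      using S that by (intro decrease) auto
    show ?thesis
      by (rule contracts_within_split[where \<Phi> = \<Phi> and \<Omega> = \<Omega> and L = L and C = C and b = b])
        (fact less.hyps \<open>1 \<le> M\<close> less.prems(1,3,4) sep\<^sub>X\<^sub>Y crossing small\<^sub>S final\<^sub>S decrease\<^sub>S)+
  qed
qed

lemma contraction_sequence_cost_le:
  assumes "hereditarily_separable c K {..<n} (underlying_edges E ends)" "1 \<le> M"
    and "admissible_potential c K L (\<Phi> (real n)) \<Phi>" "1 \<le> n"
  shows "\<exists>s. contraction_sequence n s \<and>
    real (steps_cost E ends d s) \<le> real (n - 1) * (2 * real M powr (L / 2))"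
proof -
  have "0 \<in> {..<n}"
    using assms(4) by simp
  then have "{..<n} \<noteq> {}"
    by blast
  moreover have "real (dim_prod (open_idx {..<n})) ^ 2 \<le> real M powr 0"
    using assms(2) by (simp add: open_idx_all dim_prod_def)
  ultimately obtain s where s: "contracts_within L {..<n} s"
    using contracts_within_exists[OF assms(1-3) subset_refl] by fastforce
  then have merges: "merges (singletons {..<n}) s {{..<n}}"
    by (simp add: contracts_within_def)
  then have "contraction_sequence n s"
    by (simp add: contraction_sequence_def singletons_def valid_steps_if_merges)
  moreover have "length s \<le> n - 1"
  proof -
    have "card (singletons {..<n}) = n"
      by (simp add: singletons_def card_image)
    then show ?thesis
      using merges_length[OF merges] by (simp add: singletons_def)
  qed
  moreover have "real (steps_cost E ends d s) \<le> real (length s) * (2 * real M powr (L / 2))"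
  proof (rule steps_cost_le, intro ballI, clarify)
    fix A B assume "(A, B) \<in> set s"
    then have "real (dim_prod (open_idx A \<union> open_idx B)) ^ 2 \<le> real M powr L"
      using s unfolding contracts_within_def by auto
    then have "real (dim_prod (open_idx A \<union> open_idx B)) \<le> real M powr (L / 2)"
      unfolding powr_half_sqrt_powr[OF of_nat_0_le_iff] by (rule real_le_rsqrt)
    then show "real (pair_cost E ends d A B) \<le> 2 * real M powr (L / 2)"
      by (simp add: pair_cost_def dim_prod_def)
  qed
  ultimately show ?thesis
    by (meson mult_right_mono of_nat_mono order_trans powr_ge_zero zero_le_mult_iff zero_le_numeral)
qed

end

section \<open>The potential\<close>

text \<open>\<open>sqrt_coeff c\<close> solves \<open>\<alpha> = \<alpha> sqrt (2/3) + c\<close>, so \<open>\<alpha> sqrt m\<close> absorbs a separator of size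
  \<open>c sqrt m\<close> when the cluster shrinks to \<open>2m/3\<close>; the logarithmic term pays for the additive
  errors, since it drops by \<open>log_coeff c k / 10\<close> once the cluster shrinks by a factor \<open>9/10\<close>.\<close>

definition sqrt_coeff :: "real \<Rightarrow> real" where
  "sqrt_coeff c = c / (1 - sqrt (2/3))"

definition log_coeff :: "real \<Rightarrow> real \<Rightarrow> real" where
  "log_coeff c k = 10 * (k + sqrt_coeff c * (c + k) / (2 * sqrt (2/3)))"

definition separator_potential :: "real \<Rightarrow> real \<Rightarrow> real \<Rightarrow> real" where
  "separator_potential c k t = sqrt_coeff c * sqrt t + log_coeff c k * ln t"

lemma sqrt_coeff_eq: "sqrt_coeff c = sqrt_coeff c * sqrt (2/3) + c"
  by (simp add: sqrt_coeff_def field_simps)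

lemma sqrt_coeff_gt: "0 < c \<Longrightarrow> c < sqrt_coeff c"
  using sqrt_coeff_eq[of c] by (simp add: sqrt_coeff_def)

lemma sqrt_add_le:
  fixes x y :: real
  assumes "0 < x" "0 \<le> y"
  shows "sqrt (x + y) \<le> sqrt x + y / (2 * sqrt x)"
proof (rule real_le_lsqrt)
  have "(sqrt x + y / (2 * sqrt x)) ^ 2 = x + y + (y / (2 * sqrt x)) ^ 2"
    using assms by (simp add: power2_sum)
  then show "x + y \<le> (sqrt x + y / (2 * sqrt x)) ^ 2"
    by simp
qed (use assms in auto)

lemma sqrt_shrink_le:
  fixes m m' s a :: real
  assumes "1 \<le> m" "0 \<le> s" "m' \<le> 2 * m / 3 + s" "s \<le> a * sqrt m"
  shows "sqrt m' \<le> sqrt (2/3) * sqrt m + a / (2 * sqrt (2/3))"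
proof -
  have "sqrt m' \<le> sqrt (2/3 * m) + s / (2 * sqrt (2/3 * m))"
    using assms(1-3) by (intro order_trans[OF real_sqrt_le_mono sqrt_add_le]) auto
  also have "\<dots> = sqrt (2/3) * sqrt m + s / (2 * sqrt (2/3) * sqrt m)"
    unfolding real_sqrt_mult by (simp only: mult.assoc)
  also have "s / (2 * sqrt (2/3) * sqrt m) \<le> a / (2 * sqrt (2/3))"
    using assms(1,4) by (simp add: field_simps)
  finally show ?thesis
    by simp
qed

lemma affine_sqrt_le:
  fixes c k m :: real
  assumes "0 \<le> c" "0 \<le> k" "25 * (c + k) ^ 2 \<le> m" "1 \<le> m"
  shows "c * sqrt m + k \<le> (c + k) * sqrt m" "(c + k) * sqrt m \<le> m / 5"
proof -
  have "5 * (c + k) \<le> sqrt m"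
    using real_sqrt_le_mono[OF assms(3)] assms(1,2) by (simp add: real_sqrt_mult)
  then have "(c + k) * sqrt m \<le> sqrt m / 5 * sqrt m"
    using assms(4) by (intro mult_right_mono) auto
  then show "(c + k) * sqrt m \<le> m / 5"
    using assms(4) by simp
  show "c * sqrt m + k \<le> (c + k) * sqrt m"
    using mult_left_mono[of 1 "sqrt m" k] assms(2,4) by (simp add: algebra_simps)
qed

lemma separator_potential_decrease:
  assumes "0 < c" "0 \<le> k" "25 * (c + k) ^ 2 \<le> m" "1 \<le> m"
    and "0 \<le> s" "s \<le> c * sqrt m + k" "1 \<le> m'" "m' \<le> 2 * m / 3 + s"
  shows "separator_potential c k m' + s \<le> separator_potential c k m"
proof -
  define r where "r = sqrt (2/3 :: real)"
  define \<alpha> where "\<alpha> = sqrt_coeff c"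
  define \<beta> where "\<beta> = log_coeff c k"
  have \<alpha>: "0 < \<alpha>" and \<beta>: "0 \<le> \<beta>"
    using assms(1,2) sqrt_coeff_gt[OF assms(1)] by (auto simp: \<alpha>_def \<beta>_def log_coeff_def)
  have s_le: "s \<le> (c + k) * sqrt m" "s \<le> m / 5"
    using affine_sqrt_le[of c k m] assms(1-4,6) by linarith+
  have "ln m' \<le> ln (9/10 * m)"
    using assms(7,8) \<open>s \<le> m / 5\<close> by simp
  also have "\<dots> = ln (9/10) + ln m"
    using assms(4) by (intro ln_mult_pos) auto
  also have "\<dots> \<le> ln m - 1/10"
    using ln_le_minus_one[of "9/10"] by simp
  finally have "ln m' \<le> ln m - 1/10" .
  from mult_left_mono[OF this \<beta>]
  have log_part: "\<beta> * ln m' \<le> \<beta> * ln m - \<beta> / 10"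
    by (simp add: right_diff_distrib)
  have "sqrt m' \<le> r * sqrt m + (c + k) / (2 * r)"
    unfolding r_def using assms(4,5,8) s_le(1) by (rule sqrt_shrink_le)
  then have "\<alpha> * sqrt m' \<le> \<alpha> * (r * sqrt m + (c + k) / (2 * r))"
    using \<alpha> by (simp add: mult_left_mono)
  also have "\<dots> = (\<alpha> * r) * sqrt m + \<alpha> * (c + k) / (2 * r)"
    by (simp add: algebra_simps)
  also have "\<alpha> * r = \<alpha> - c"
    using sqrt_coeff_eq[of c] by (simp add: \<alpha>_def r_def)
  also have "\<alpha> * (c + k) / (2 * r) = \<beta> / 10 - k"
    by (simp add: \<alpha>_def \<beta>_def r_def log_coeff_def field_simps)
  finally show ?thesis
    using log_part assms(6) by (simp add: separator_potential_def \<alpha>_def \<beta>_def algebra_simps)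
qed

lemma admissible_separator_potential:
  assumes "0 < c" "K \<le> k" "0 \<le> k"
    and big: "50 * (c + k) ^ 2 \<le> sqrt_coeff c * sqrt x"
    and log_small: "log_coeff c k * ln x + k \<le> (sqrt_coeff c - c) * sqrt (sqrt_coeff c * sqrt x / 2)"
  shows "admissible_potential c K (sqrt_coeff c * sqrt x) (separator_potential c k x) (separator_potential c k)"
  unfolding admissible_potential_def
proof (intro allI impI conjI)
  fix m :: real assume m: "1 \<le> m" "sqrt_coeff c * sqrt x < 2 * m"
  have "25 * (c + k) ^ 2 \<le> m"
    using big m(2) by linarith
  from affine_sqrt_le[OF less_imp_le[OF assms(1)] assms(3) this m(1)]
  show "c * sqrt m + K < m / 3"
    using assms(2) m(1) by linarith
  have "sqrt (sqrt_coeff c * sqrt x / 2) \<le> sqrt m"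
    using m(2) by simp
  then have "log_coeff c k * ln x + k \<le> (sqrt_coeff c - c) * sqrt m"
    using log_small sqrt_coeff_gt[OF assms(1)] by (smt (verit) mult_left_mono)
  moreover have "0 \<le> log_coeff c k * ln m"
    using m(1) assms(1,3) sqrt_coeff_gt[OF assms(1)] by (simp add: log_coeff_def)
  ultimately show "separator_potential c k x - separator_potential c k m + c * sqrt m + K
      \<le> sqrt_coeff c * sqrt x"
    using assms(2) by (simp add: separator_potential_def algebra_simps)
  show "separator_potential c k m' + s \<le> separator_potential c k m"
    if "0 \<le> s" "s \<le> c * sqrt m + K" "1 \<le> m'" "m' \<le> 2 * m / 3 + s" for s m'
    using that assms(1-3) m(1) \<open>25 * (c + k) ^ 2 \<le> m\<close>
    by (intro separator_potential_decrease) auto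
qed

lemma eventually_admissible_separator_potential:
  assumes "0 < c"
  shows "\<forall>\<^sub>F x in at_top. admissible_potential c K (sqrt_coeff c * sqrt x)
    (separator_potential c (max K 0) x) (separator_potential c (max K 0))"
proof -
  define \<alpha> \<beta> k where "\<alpha> = sqrt_coeff c" and "\<beta> = log_coeff c (max K 0)" and "k = max K 0"
  have "0 < \<alpha>" "0 < \<alpha> - c"
    using sqrt_coeff_gt[OF assms] assms by (simp_all add: \<alpha>_def)
  then have "\<forall>\<^sub>F x in at_top. 50 * (c + k) ^ 2 \<le> \<alpha> * sqrt x"
    "\<forall>\<^sub>F x in at_top. \<beta> * ln x + k \<le> (\<alpha> - c) * sqrt (\<alpha> * sqrt x / 2)"
    by real_asymp+
  then have "\<forall>\<^sub>F x in at_top. 50 * (c + k) ^ 2 \<le> \<alpha> * sqrt x \<and>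
      \<beta> * ln x + k \<le> (\<alpha> - c) * sqrt (\<alpha> * sqrt x / 2)"
    by (rule eventually_conj)
  then show ?thesis
    by (rule eventually_mono) (use assms in \<open>auto intro!: admissible_separator_potential simp: \<alpha>_def \<beta>_def k_def\<close>)
qed

lemma less_powr_inverse_log_if_le:
  assumes "1 \<le> n" "0 < y" "x \<le> real (n - 1) * (2 * y)"
  shows "x < 2 * real n powr (1 / log 2 (3/2)) * y"
proof -
  have "log 2 (3/2 :: real) \<le> log 2 2"
    by simp
  then have "1 \<le> 1 / log 2 (3/2 :: real)"
    by simp
  then have "real (n - 1) < real n powr (1 / log 2 (3/2))"
    using assms(1) powr_mono[of 1 "1 / log 2 (3/2)" "real n"] by simp
  then have "real (n - 1) * (2 * y) < real n powr (1 / log 2 (3/2)) * (2 * y)"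
    using assms(2) by (intro mult_strict_right_mono) auto
  then show ?thesis
    using assms(3) by simp
qed

theorem mainTheorem2:
  fixes M :: nat and c :: real
  assumes "M \<ge> 2" and "planar_separator_const c"
  shows "\<forall>\<^sub>F n in sequentially.
     \<forall>(E :: nat set) ends d.
        tensor_network n E ends d M \<and> planar_graph {..<n} (underlying_edges E ends) \<longrightarrow>
        (\<exists>s. contraction_sequence n s \<and>
             real (steps_cost E ends d s)
               < 2 * real n powr (1 / log 2 (3/2))
                   * real M powr ((c / (2 - 2 * sqrt (2/3))) * sqrt (real n)))"
proof -
  have "0 < c"
    using assms(2) by (rule planar_separator_const_pos)
  obtain K where separable: "\<And>(V :: nat set) Eg. simple_graph V Eg \<Longrightarrow> planar_graph V Eg \<Longrightarrow>
      hereditarily_separable c K V Eg"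
    using planar_hereditarily_separable[OF assms(2)] by blast
  let ?\<Phi> = "separator_potential c (max K 0)" and ?L = "\<lambda>n. sqrt_coeff c * sqrt (real n)"
  have "\<forall>\<^sub>F n in sequentially. admissible_potential c K (?L n) (?\<Phi> (real n)) ?\<Phi> \<and> 1 \<le> n"
    using eventually_compose_filterlim[OF eventually_admissible_separator_potential[OF \<open>0 < c\<close>]
        filterlim_real_sequentially] eventually_ge_at_top
    by (rule eventually_conj)
  then show ?thesis
  proof (rule eventually_mono, intro allI impI)
    fix n E ends d
    assume n: "admissible_potential c K (?L n) (?\<Phi> (real n)) ?\<Phi> \<and> 1 \<le> n"
      and tn: "tensor_network n E ends d M \<and> planar_graph {..<n} (underlying_edges E ends)"
    interpret closed_tensor_network n E ends d M
      using tn by unfold_locales simp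
    have "1 \<le> M" "1 \<le> n"
      using assms(1) n by auto
    then obtain s where "contraction_sequence n s"
      and cost: "real (steps_cost E ends d s) \<le> real (n - 1) * (2 * real M powr (?L n / 2))"
      using contraction_sequence_cost_le[OF separable[OF simple_graph_underlying] _ conjunct1[OF n]]
        tn by blast
    moreover have "?L n / 2 = c / (2 - 2 * sqrt (2/3)) * sqrt (real n)"
      by (simp add: sqrt_coeff_def field_simps)
    ultimately show "\<exists>s. contraction_sequence n s \<and> real (steps_cost E ends d s)
        < 2 * real n powr (1 / log 2 (3/2)) * real M powr ((c / (2 - 2 * sqrt (2/3))) * sqrt (real n))"
      using \<open>1 \<le> n\<close> \<open>1 \<le> M\<close> by (intro exI[of _ s] conjI less_powr_inverse_log_if_le) auto
  qed
qed

end
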